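(* Let $A$ be a nonempty set and let $G\subseteq A^A$ be a group under composition of maps, with identity element $e$. Define the equivalence relation $\sim$ on $A$ by $a\sim b$ iff $e(a)=e(b)$, write $[a]$ for the class of $a$, and for $f\in G$ let $\hat f:A/\sim\,\to A/\sim$ be given by $\hat f([x])=[f(x)]$. Set $\hat G=\{\hat f\mid f\in G\}$. Then $\hat G$ is a permutation group on $A/\sim$, and the map $\rho:G\to\hat G$, $f\mapsto\hat f$, is a group isomorphism.
   Context: $A^A$ denotes the set of all maps $A\to A$. A permutation group on a set $X$ is a group of bijections $X\to X$ under composition. The identity element $e$ of $G$ need not be the identity map of $A$. *)

theory Defs
  imports "HOL-Algebra.Algebra" "HOL-Library.FuncSet"
begin

definition comp_monoid :: "'a set \<Rightarrow> ('a \<Rightarrow> 'a) set \<Rightarrow> ('a \<Rightarrow> 'a) \<Rightarrow> ('a \<Rightarrow> 'a) monoid"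
  where "comp_monoid A G e = \<lparr>carrier = G, monoid.mult = (\<lambda>f g. compose A f g), one = e\<rparr>"

definition eq_rel :: "'a set \<Rightarrow> ('a \<Rightarrow> 'a) \<Rightarrow> ('a \<times> 'a) set"
  where "eq_rel A e = {(a, b). a \<in> A \<and> b \<in> A \<and> e a = e b}"

definition hat :: "'a set \<Rightarrow> ('a \<Rightarrow> 'a) \<Rightarrow> ('a \<Rightarrow> 'a) \<Rightarrow> 'a set \<Rightarrow> 'a set"
  where "hat A e f = restrict (\<lambda>Cl. Image (eq_rel A e) {f (SOME x. x \<in> Cl)}) (A // eq_rel A e)"

end

theory Submission
  imports Defs
begin

(* The neutral element e of G satisfies e o f = f o e = f on A for every f in G.  From f o e = f,
   each f is constant on the classes of ~, so hat f is well defined and f |-> hat f is a monoid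
   homomorphism into the self-maps of A/~, sending G into the bijections.  From e o f = f, the value
   f x is determined by its class [f x] (it equals e (f x)), so f is recovered from hat f. *)

lemma hom_imp_iso_image:
  assumes "h \<in> hom G H" and "inj_on h (carrier G)"
  shows "h \<in> iso G (H\<lparr>carrier := h ` carrier G\<rparr>)"
  using assms by (auto simp: iso_def hom_def bij_betw_def)

lemma equiv_eq_rel: "equiv A (eq_rel A e)"
  by (auto simp: equiv_def refl_on_def sym_def trans_def eq_rel_def)

lemma eq_rel_class_eq_iff:
  assumes "a \<in> A" and "b \<in> A"
  shows "eq_rel A e `` {a} = eq_rel A e `` {b} \<longleftrightarrow> e a = e b"
proof -
  have "(a, b) \<in> eq_rel A e \<longleftrightarrow> e a = e b" using assms by (simp add: eq_rel_def)
  then show ?thesis using eq_equiv_class_iff[OF equiv_eq_rel assms] by simp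
qed

locale map_monoid =
  fixes A :: "'a set" and G :: "('a \<Rightarrow> 'a) set" and e :: "'a \<Rightarrow> 'a"
  assumes maps: "G \<subseteq> A \<rightarrow>\<^sub>E A"
    and monoid: "monoid (comp_monoid A G e)"
begin

abbreviation "R \<equiv> eq_rel A e"
abbreviation "S \<equiv> A // R"

lemma carrier_comp_monoid [simp]: "carrier (comp_monoid A G e) = G"
  by (simp add: comp_monoid_def)

lemma one_closed: "e \<in> G"
  using monoid.one_closed[OF monoid] by (simp add: comp_monoid_def)

lemma compose_closed: "f \<in> G \<Longrightarrow> g \<in> G \<Longrightarrow> compose A f g \<in> G"
  using monoid.m_closed[OF monoid] by (simp add: comp_monoid_def)

lemma map_closed: "f \<in> G \<Longrightarrow> x \<in> A \<Longrightarrow> f x \<in> A"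
  using maps by blast

lemma one_apply: "f \<in> G \<Longrightarrow> x \<in> A \<Longrightarrow> e (f x) = f x"
  using monoid.l_one[OF monoid, of f] by (simp add: comp_monoid_def) (metis compose_eq)

lemma apply_one: "f \<in> G \<Longrightarrow> x \<in> A \<Longrightarrow> f (e x) = f x"
  using monoid.r_one[OF monoid, of f] by (simp add: comp_monoid_def) (metis compose_eq)

lemma hat_class:
  assumes f: "f \<in> G" and a: "a \<in> A"
  shows "hat A e f (R `` {a}) = R `` {f a}"
proof -
  define x where "x = (SOME x. x \<in> R `` {a})"
  have "a \<in> R `` {a}" using a by (simp add: eq_rel_def)
  then have "x \<in> R `` {a}" unfolding x_def by (rule someI)
  then have "x \<in> A" and "e x = e a" by (auto simp: eq_rel_def)
  then have "f x = f a" using apply_one[OF f] a by metis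
  moreover have "hat A e f (R `` {a}) = R `` {f x}"
    unfolding hat_def x_def using quotientI[of a A R] a by simp
  ultimately show ?thesis by simp
qed

lemma hat_funcset:
  assumes f: "f \<in> G"
  shows "hat A e f \<in> S \<rightarrow>\<^sub>E S"
proof (rule PiE_I)
  fix C assume "C \<in> S"
  then obtain a where "a \<in> A" and "C = R `` {a}" by (rule quotientE)
  then show "hat A e f C \<in> S" using f by (simp add: hat_class map_closed quotientI)
next
  fix C assume "C \<notin> S"
  then show "hat A e f C = undefined" by (simp add: hat_def)
qed

lemma hat_compose:
  assumes f: "f \<in> G" and g: "g \<in> G"
  shows "hat A e (compose A f g) = compose S (hat A e f) (hat A e g)"
proof (rule extensionalityI)
  show "hat A e (compose A f g) \<in> extensional S" by (simp add: hat_def)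
  show "compose S (hat A e f) (hat A e g) \<in> extensional S" by (simp add: compose_def)
  fix C assume "C \<in> S"
  then obtain a where a: "a \<in> A" and C: "C = R `` {a}" by (rule quotientE)
  show "hat A e (compose A f g) C = compose S (hat A e f) (hat A e g) C"
    using a f g compose_closed[OF f g]
    by (simp add: C hat_class map_closed quotientI compose_def)
qed

lemma hat_one: "hat A e e = (\<lambda>C\<in>S. C)"
proof (rule extensionalityI)
  show "hat A e e \<in> extensional S" by (simp add: hat_def)
  show "(\<lambda>C\<in>S. C) \<in> extensional S" by simp
  fix C assume "C \<in> S"
  then obtain a where a: "a \<in> A" and C: "C = R `` {a}" by (rule quotientE)
  have "R `` {e a} = R `` {a}"
    using a one_closed one_apply map_closed by (simp add: eq_rel_class_eq_iff)
  then show "hat A e e C = (\<lambda>C\<in>S. C) C"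
    using a one_closed by (simp add: C hat_class quotientI)
qed

lemma inj_on_hat: "inj_on (hat A e) G"
proof (rule inj_onI)
  fix f g assume f: "f \<in> G" and g: "g \<in> G" and eq: "hat A e f = hat A e g"
  show "f = g"
  proof (rule extensionalityI)
    show "f \<in> extensional A" "g \<in> extensional A" using f g maps by (auto simp: PiE_def)
    fix x assume x: "x \<in> A"
    have "R `` {f x} = R `` {g x}"
      using eq hat_class[OF f x] hat_class[OF g x] by simp
    then have "e (f x) = e (g x)"
      using x f g by (simp add: eq_rel_class_eq_iff map_closed)
    then show "f x = g x" using x f g by (simp add: one_apply)
  qed
qed

lemma hat_Bij:
  assumes "f \<in> Units (comp_monoid A G e)"
  shows "hat A e f \<in> Bij S"
proof -
  obtain g where g: "g \<in> G" and f: "f \<in> G"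
    and gf: "compose A g f = e" and fg: "compose A f g = e"
    using assms by (auto simp: Units_def comp_monoid_def)
  have "compose S (hat A e g) (hat A e f) = (\<lambda>C\<in>S. C)"
    and "compose S (hat A e f) (hat A e g) = (\<lambda>C\<in>S. C)"
    using hat_compose[OF g f] hat_compose[OF f g] by (simp_all add: gf fg hat_one)
  then have "hat A e g (hat A e f C) = C" and "hat A e f (hat A e g C) = C" if "C \<in> S" for C
    using that by (metis compose_eq restrict_apply')+
  then have "bij_betw (hat A e f) S S"
    using PiE_mem[OF hat_funcset[OF f]] PiE_mem[OF hat_funcset[OF g]]
    by (intro bij_betwI[where g = "hat A e g"] funcsetI) simp_all
  then show ?thesis using hat_funcset[OF f] by (simp add: Bij_def PiE_iff)
qed

end

locale map_group = map_monoid +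
  assumes group: "group (comp_monoid A G e)"
begin

lemma hat_hom: "hat A e \<in> hom (comp_monoid A G e) (BijGroup S)"
proof (rule homI)
  fix f assume "f \<in> carrier (comp_monoid A G e)"
  then show "hat A e f \<in> carrier (BijGroup S)"
    using hat_Bij group.Units_eq[OF group] by (simp add: BijGroup_def)
next
  fix f g assume "f \<in> carrier (comp_monoid A G e)" "g \<in> carrier (comp_monoid A G e)"
  then show "hat A e (f \<otimes>\<^bsub>comp_monoid A G e\<^esub> g) = hat A e f \<otimes>\<^bsub>BijGroup S\<^esub> hat A e g"
    using hat_Bij group.Units_eq[OF group]
    by (simp add: comp_monoid_def BijGroup_def hat_compose)
qed

lemma subgroup_hat_image: "subgroup (hat A e ` G) (BijGroup S)"
  using group_hom.img_is_subgroup[of "comp_monoid A G e" "BijGroup S" "hat A e"]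
  by (simp add: group_hom_def group_hom_axioms_def group group_BijGroup hat_hom)

lemma hat_iso: "hat A e \<in> iso (comp_monoid A G e) ((BijGroup S)\<lparr>carrier := hat A e ` G\<rparr>)"
  using hom_imp_iso_image[OF hat_hom] inj_on_hat by simp

end

theorem theorem2p8:
  fixes A :: "'a set" and G :: "('a \<Rightarrow> 'a) set" and e :: "'a \<Rightarrow> 'a"
  assumes "A \<noteq> {}"
    and "G \<subseteq> A \<rightarrow>\<^sub>E A"
    and "group (comp_monoid A G e)"
  shows "subgroup (hat A e ` G) (BijGroup (A // eq_rel A e))
       \<and> hat A e \<in> iso (comp_monoid A G e)
           ((BijGroup (A // eq_rel A e))\<lparr>carrier := hat A e ` G\<rparr>)"
proof -
  interpret map_group A G e
    using assms(2,3) by (simp add: map_group_def map_monoid_def map_group_axioms_def group.is_monoid)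
  show ?thesis using subgroup_hat_image hat_iso by blast
qed

end
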